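(* Let $n\ge3$ and let $\mathcal{L}$ be the operator on $\mathbb{R}^{\mathbb{Z}_n}$ given by $(\mathcal{L}v)(k)=\frac12\big(v(k+1)+v(k-1)\big)$ (indices mod $n$), and let $\mathbf{e}_0\in\mathbb{R}^{\mathbb{Z}_n}$ be the indicator vector of $0$. Then for every integer $\tau\ge1$, $$\max\left\{\frac1n,\frac{1}{2\sqrt{\tau}}\right\}\le \langle \mathbf{e}_0,\mathcal{L}^{2\tau}\mathbf{e}_0\rangle\le\frac4n+\frac{1}{\sqrt{\pi\tau}}.$$
   Context: $\mathcal{L}$ is the FTCS operator in dimension $d=1$ with $r=1/2$ (i.e. $\Delta t=\Delta x^2/(2\alpha)$); it is the transition matrix of the simple random walk on the cycle $\mathbb{Z}_n$, and $\langle \mathbf{e}_0,\mathcal{L}^{2\tau}\mathbf{e}_0\rangle=\|\mathcal{L}^\tau\mathbf{e}_0\|_2^2$. *)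

theory Defs
  imports "HOL-Analysis.Analysis"
begin

text \<open>Vectors in R^(Z_n) are represented as functions nat => real; only the values
on {0..<n} (residues mod n) matter. Indices are taken mod n.\<close>

definition cycle_op :: "nat \<Rightarrow> (nat \<Rightarrow> real) \<Rightarrow> (nat \<Rightarrow> real)" where
  "cycle_op n v = (\<lambda>k. (v ((k + 1) mod n) + v ((k + n - 1) mod n)) / 2)"

definition e0 :: "nat \<Rightarrow> nat \<Rightarrow> real" where
  "e0 n = (\<lambda>k. if k mod n = 0 then 1 else 0)"

definition cyc_inner :: "nat \<Rightarrow> (nat \<Rightarrow> real) \<Rightarrow> (nat \<Rightarrow> real) \<Rightarrow> real" where
  "cyc_inner n u v = (\<Sum>k<n. u k * v k)"

end

theory Submission
  imports Defs "HOL-Real_Asymp.Real_Asymp"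
begin

text \<open>
  Let \<open>p\<close> be the return probability. Since \<open>L\<close> is self-adjoint and preserves total mass,
  \<open>p\<close> is the squared norm of \<open>L\<^sup>\<tau> e\<^sub>0\<close>, a vector with entry sum 1, so \<open>p \<ge> 1/n\<close> by
  Cauchy-Schwarz. Expanding \<open>L = (S + S\<^sup>-\<^sup>1)/2\<close> binomially, \<open>4\<^sup>\<tau> p\<close> is the sum of the
  coefficients \<open>C(2\<tau>, i)\<close> over the \<open>i \<le> 2\<tau>\<close> with \<open>2i \<equiv> 2\<tau> (mod n)\<close>. The term \<open>i = \<tau>\<close>
  gives the central binomial probability \<open>c\<^sub>\<tau>\<close>; since \<open>m c\<^sub>m\<^sup>2\<close> increases from \<open>1/4\<close> to
  its Wallis limit \<open>1/\<pi>\<close>, it lies between \<open>1/(2\<surd>\<tau>)\<close> and \<open>1/\<surd>(\<pi>\<tau>)\<close>. The other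
  indices are at least \<open>n/2\<close> apart from each other and from \<open>\<tau>\<close>, so each of their
  coefficients is dominated by the \<open>n/2\<close> coefficients between it and the centre;
  these blocks are disjoint, so the other terms contribute at most \<open>2/n\<close>.
\<close>

lemma cyclic_pred_succ:
  assumes "k < n"
  shows "((k + 1) mod n + n - 1) mod n = (k::nat)"
proof (cases "k + 1 = n")
  case False
  with assms show ?thesis by simp
qed (use assms in simp)

lemma cyclic_succ_pred:
  assumes "k < n"
  shows "((k + n - 1) mod n + 1) mod n = (k::nat)"
  using assms by (simp add: mod_Suc_eq)

lemma sum_cyclic_shift:
  fixes f :: "nat \<Rightarrow> nat \<Rightarrow> 'a::comm_monoid_add"
  assumes "n > 0"
  shows "(\<Sum>k<n. f k ((k + 1) mod n)) = (\<Sum>k<n. f ((k + n - 1) mod n) k)"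
  by (rule sum.reindex_bij_witness[where j = "\<lambda>k. (k + 1) mod n" and i = "\<lambda>k. (k + n - 1) mod n"])
     (use assms cyclic_pred_succ cyclic_succ_pred in auto)

lemma cycle_op_self_adjoint:
  assumes "n > 0"
  shows "cyc_inner n u (cycle_op n v) = cyc_inner n (cycle_op n u) v"
proof -
  have succ: "(\<Sum>k<n. u k * v ((k + 1) mod n)) = (\<Sum>k<n. u ((k + n - 1) mod n) * v k)"
    using sum_cyclic_shift[OF assms, of "\<lambda>k l. u k * v l"] .
  have pred: "(\<Sum>k<n. u ((k + 1) mod n) * v k) = (\<Sum>k<n. u k * v ((k + n - 1) mod n))"
    using sum_cyclic_shift[OF assms, of "\<lambda>k l. u l * v k"] .
  have "cyc_inner n u (cycle_op n v)
      = ((\<Sum>k<n. u k * v ((k + 1) mod n)) + (\<Sum>k<n. u k * v ((k + n - 1) mod n))) / 2"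
    unfolding cyc_inner_def cycle_op_def by (simp add: sum.distrib distrib_left flip: sum_divide_distrib)
  also have "\<dots> = ((\<Sum>k<n. u ((k + n - 1) mod n) * v k) + (\<Sum>k<n. u ((k + 1) mod n) * v k)) / 2"
    by (simp only: succ pred)
  also have "\<dots> = cyc_inner n (cycle_op n u) v"
    unfolding cyc_inner_def cycle_op_def by (simp add: sum.distrib distrib_right flip: sum_divide_distrib)
  finally show ?thesis .
qed

lemma funpow_cycle_op_self_adjoint:
  assumes "n > 0"
  shows "cyc_inner n u ((cycle_op n ^^ j) v) = cyc_inner n ((cycle_op n ^^ j) u) v"
proof (induction j arbitrary: u)
  case (Suc j)
  have "cyc_inner n u ((cycle_op n ^^ Suc j) v) = cyc_inner n (cycle_op n u) ((cycle_op n ^^ j) v)"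
    using cycle_op_self_adjoint[OF assms] by simp
  also have "\<dots> = cyc_inner n ((cycle_op n ^^ Suc j) u) v"
    by (simp only: Suc.IH funpow_Suc_right o_def)
  finally show ?case .
qed simp

lemma sum_cycle_op:
  assumes "n > 0"
  shows "(\<Sum>k<n. cycle_op n w k) = (\<Sum>k<n. w k)"
proof -
  have "(\<Sum>k<n. w ((k + 1) mod n)) = (\<Sum>k<n. w k)"
    using sum_cyclic_shift[OF assms, of "\<lambda>k l. w l"] by simp
  moreover have "(\<Sum>k<n. w ((k + n - 1) mod n)) = (\<Sum>k<n. w k)"
    using sum_cyclic_shift[OF assms, of "\<lambda>k l. w k"] by simp
  ultimately show ?thesis
    unfolding cycle_op_def by (simp add: sum.distrib flip: sum_divide_distrib)
qed

lemma sum_funpow_cycle_op: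
  assumes "n > 0"
  shows "(\<Sum>k<n. (cycle_op n ^^ j) w k) = (\<Sum>k<n. w k)"
  by (induction j) (simp_all add: sum_cycle_op[OF assms])

lemma sum_e0:
  assumes "n > 0"
  shows "(\<Sum>k<n. e0 n k) = 1"
proof -
  have "(\<Sum>k<n. e0 n k) = (\<Sum>k<n. if k = 0 then 1 else 0)"
    unfolding e0_def by (rule sum.cong) auto
  with assms show ?thesis by simp
qed

lemma cyc_inner_e0:
  assumes "n > 0"
  shows "cyc_inner n (e0 n) w = w 0"
proof -
  have "cyc_inner n (e0 n) w = (\<Sum>k<n. if k = 0 then w k else 0)"
    unfolding cyc_inner_def e0_def by (rule sum.cong) auto
  with assms show ?thesis by simp
qed

lemma return_prob_ge_inverse:
  assumes "n > 0"
  shows "1 / real n \<le> cyc_inner n (e0 n) ((cycle_op n ^^ (2 * \<tau>)) (e0 n))"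
proof -
  define w where "w = (cycle_op n ^^ \<tau>) (e0 n)"
  have "cyc_inner n (e0 n) ((cycle_op n ^^ (2 * \<tau>)) (e0 n)) = cyc_inner n (e0 n) ((cycle_op n ^^ \<tau>) w)"
    unfolding w_def by (simp add: mult_2 funpow_add)
  also have "\<dots> = (\<Sum>k<n. (w k)\<^sup>2)"
    unfolding w_def funpow_cycle_op_self_adjoint[OF assms, of "e0 n" \<tau>]
    by (simp add: cyc_inner_def power2_eq_square)
  finally have p: "cyc_inner n (e0 n) ((cycle_op n ^^ (2 * \<tau>)) (e0 n)) = (\<Sum>k<n. (w k)\<^sup>2)" .
  have "(\<Sum>k<n. w k)\<^sup>2 \<le> (\<Sum>k<n. (w k)\<^sup>2) * card {..<n}"
    by (rule sum_squared_le_sum_of_squares)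
  moreover have "(\<Sum>k<n. w k) = 1"
    unfolding w_def sum_funpow_cycle_op[OF assms] by (rule sum_e0[OF assms])
  ultimately show ?thesis
    unfolding p using assms by (simp add: field_simps)
qed

lemma binomial_sum_Suc:
  fixes g :: "nat \<Rightarrow> real"
  shows "(\<Sum>i\<le>Suc t. real (Suc t choose i) * g i)
       = (\<Sum>i\<le>t. real (t choose i) * g (Suc i)) + (\<Sum>i\<le>t. real (t choose i) * g i)"
proof -
  have shift: "(\<Sum>i\<le>Suc t. real (Suc t choose i) * g i)
        = g 0 + (\<Sum>i\<le>t. real (t choose i) * g (Suc i)) + (\<Sum>i\<le>t. real (t choose Suc i) * g (Suc i))"
    by (subst sum.atMost_Suc_shift) (simp add: sum.distrib algebra_simps)
  have "(\<Sum>i\<le>t. real (t choose i) * g i) = (\<Sum>i\<le>Suc t. real (t choose i) * g i)"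
    by simp
  also have "\<dots> = g 0 + (\<Sum>i\<le>t. real (t choose Suc i) * g (Suc i))"
    by (subst sum.atMost_Suc_shift) simp
  finally show ?thesis
    using shift by simp
qed

text \<open>Term \<open>i\<close> collects the paths with \<open>i\<close> right and \<open>t - i\<close> left steps; a left step
  is encoded as a right step by \<open>n - 1\<close> to avoid subtraction.\<close>

lemma funpow_cycle_op_eq_binomial_sum:
  assumes "n > 0" "k < n"
  shows "(cycle_op n ^^ t) v k
       = (\<Sum>i\<le>t. real (t choose i) * v ((k + i + (n - 1) * (t - i)) mod n)) / 2 ^ t"
proof (induction t arbitrary: v)
  case (Suc t)
  define g where "g i = v ((k + i + (n - 1) * (Suc t - i)) mod n)" for i
  have step: "cycle_op n v ((k + i + (n - 1) * (t - i)) mod n) = (g (Suc i) + g i) / 2"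
    if "i \<le> t" for i
  proof -
    have "(k + i + (n - 1) * (t - i)) mod n + n - 1 = (k + i + (n - 1) * (t - i)) mod n + (n - 1)"
      using assms by simp
    then have "((k + i + (n - 1) * (t - i)) mod n + n - 1) mod n
        = (k + i + (n - 1) * (t - i) + (n - 1)) mod n"
      by (simp add: mod_add_left_eq)
    also have "k + i + (n - 1) * (t - i) + (n - 1) = k + i + (n - 1) * (Suc t - i)"
      using that by (simp add: Suc_diff_le algebra_simps)
    finally show ?thesis
      unfolding cycle_op_def g_def by (simp add: mod_Suc_eq)
  qed
  have "(cycle_op n ^^ Suc t) v k = (cycle_op n ^^ t) (cycle_op n v) k"
    by (simp only: funpow_Suc_right o_def)
  also have "\<dots> = (\<Sum>i\<le>t. real (t choose i) * ((g (Suc i) + g i) / 2)) / 2 ^ t"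
    unfolding Suc.IH by (intro arg_cong[where f = "\<lambda>s. s / 2 ^ t"] sum.cong) (use step in auto)
  also have "\<dots> = ((\<Sum>i\<le>t. real (t choose i) * g (Suc i)) + (\<Sum>i\<le>t. real (t choose i) * g i)) / 2 ^ Suc t"
    by (simp add: sum.distrib algebra_simps flip: sum_divide_distrib)
  finally show ?case
    unfolding binomial_sum_Suc g_def .
qed (use assms in simp)

lemma walk_returns_iff:
  fixes n i \<tau> :: nat
  assumes "n > 0" "i \<le> 2 * \<tau>"
  shows "(i + (n - 1) * (2 * \<tau> - i)) mod n = 0 \<longleftrightarrow> 2 * i mod n = 2 * \<tau> mod n"
proof -
  define x where "x = i + (n - 1) * (2 * \<tau> - i)"
  have "(n - 1) * (2 * \<tau> - i) + (2 * \<tau> - i) = n * (2 * \<tau> - i)"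
    using assms by (cases n) auto
  then have "x + 2 * \<tau> = 2 * i + n * (2 * \<tau> - i)"
    using assms unfolding x_def by linarith
  then have "(x + 2 * \<tau>) mod n = 2 * i mod n"
    by simp
  moreover have "x mod n = 0 \<longleftrightarrow> (x + 2 * \<tau>) mod n = 2 * \<tau> mod n"
    using mod_eq_dvd_iff_nat[of "2 * \<tau>" "x + 2 * \<tau>" n] by (auto simp: mod_add_left_eq dvd_eq_mod_eq_0)
  ultimately show ?thesis
    unfolding x_def by simp
qed

lemma return_prob_eq_binomial_sum:
  assumes "n > 0"
  shows "cyc_inner n (e0 n) ((cycle_op n ^^ (2 * \<tau>)) (e0 n))
       = (\<Sum>i | i \<le> 2 * \<tau> \<and> 2 * i mod n = 2 * \<tau> mod n. real ((2 * \<tau>) choose i)) / 4 ^ \<tau>"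
proof -
  have "cyc_inner n (e0 n) ((cycle_op n ^^ (2 * \<tau>)) (e0 n))
      = (\<Sum>i\<le>2 * \<tau>. real ((2 * \<tau>) choose i) * e0 n ((i + (n - 1) * (2 * \<tau> - i)) mod n)) / 4 ^ \<tau>"
    by (simp add: cyc_inner_e0 assms funpow_cycle_op_eq_binomial_sum power_mult)
  also have "(\<Sum>i\<le>2 * \<tau>. real ((2 * \<tau>) choose i) * e0 n ((i + (n - 1) * (2 * \<tau> - i)) mod n))
      = (\<Sum>i\<le>2 * \<tau>. if 2 * i mod n = 2 * \<tau> mod n then real ((2 * \<tau>) choose i) else 0)"
  proof (rule sum.cong)
    fix i
    assume "i \<in> {..2 * \<tau>}"
    then show "real ((2 * \<tau>) choose i) * e0 n ((i + (n - 1) * (2 * \<tau> - i)) mod n)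
        = (if 2 * i mod n = 2 * \<tau> mod n then real ((2 * \<tau>) choose i) else 0)"
      using walk_returns_iff[OF assms, of i \<tau>] by (simp add: e0_def)
  qed simp
  also have "\<dots> = (\<Sum>i | i \<le> 2 * \<tau> \<and> 2 * i mod n = 2 * \<tau> mod n. real ((2 * \<tau>) choose i))"
    by (simp add: sum.If_cases Collect_conj_eq atMost_def Int_commute)
  finally show ?thesis .
qed

definition central_binom_ratio :: "nat \<Rightarrow> real" where
  "central_binom_ratio m = real ((2 * m) choose m) / 4 ^ m"

lemma central_binom_ratio_pos: "central_binom_ratio m > 0"
  unfolding central_binom_ratio_def by simp

lemma central_binom_ratio_Suc:
  "central_binom_ratio (Suc m) = central_binom_ratio m * (2 * m + 1) / (2 * m + 2)"
proof -
  define x where "x = real m + 1"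
  have x: "x > 0"
    unfolding x_def by simp
  have "real ((2 * Suc m) choose Suc m) = fact (Suc (Suc (2 * m))) / (fact (Suc m) * fact (Suc m))"
    by (simp add: binomial_fact del: binomial_Suc_Suc)
  also have "\<dots> = (2 * x) * (2 * m + 1) * fact (2 * m) / ((x * fact m) * (x * fact m))"
    unfolding x_def by (simp only: fact_Suc of_nat_Suc) (simp add: algebra_simps)
  also have "\<dots> = 2 * (2 * m + 1) / x * real ((2 * m) choose m)"
    using x by (simp add: binomial_fact field_simps)
  finally have "real ((2 * Suc m) choose Suc m) = 2 * (2 * m + 1) / x * real ((2 * m) choose m)" .
  moreover have "2 * real m + 2 = 2 * x"
    unfolding x_def by simp
  ultimately show ?thesis
    using x unfolding central_binom_ratio_def by (simp add: field_simps del: binomial_Suc_Suc)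
qed

lemma wallis_partial_product_eq:
  "(\<Prod>k=1..m. 4 * real k ^ 2 / (4 * real k ^ 2 - 1)) = 1 / (central_binom_ratio m ^ 2 * (2 * m + 1))"
proof (induction m)
  case (Suc m)
  have factor: "4 * real (Suc m) ^ 2 - 1 = (2 * m + 1) * (2 * m + 3)"
    by (simp add: power2_eq_square algebra_simps)
  have "(\<Prod>k=1..Suc m. 4 * real k ^ 2 / (4 * real k ^ 2 - 1))
      = 4 * real (Suc m) ^ 2 / (4 * real (Suc m) ^ 2 - 1) * (\<Prod>k=1..m. 4 * real k ^ 2 / (4 * real k ^ 2 - 1))"
    by (simp add: prod.nat_ivl_Suc')
  also have "\<dots> = 4 * real (Suc m) ^ 2 / ((2 * m + 1) * (2 * m + 3)) / (central_binom_ratio m ^ 2 * (2 * m + 1))"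
    unfolding Suc.IH factor by simp
  also have "\<dots> = 1 / (central_binom_ratio (Suc m) ^ 2 * (2 * Suc m + 1))"
    using central_binom_ratio_pos[of m] unfolding central_binom_ratio_Suc
    by (simp add: field_simps power2_eq_square)
  finally show ?case .
qed (simp add: central_binom_ratio_def)

lemma incseq_scaled_central_binom_ratio: "incseq (\<lambda>m. real m * central_binom_ratio m ^ 2)"
proof (rule incseq_SucI)
  fix m
  have "real m * (4 * (real m + 1)) \<le> (2 * real m + 1) ^ 2"
    by (simp add: power2_eq_square algebra_simps)
  then have "real m \<le> (2 * real m + 1) ^ 2 / (4 * (real m + 1))"
    by (simp add: field_simps)
  then have "central_binom_ratio m ^ 2 * real m
      \<le> central_binom_ratio m ^ 2 * ((2 * real m + 1) ^ 2 / (4 * (real m + 1)))"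
    by (rule mult_left_mono) simp
  also have "\<dots> = real (Suc m) * central_binom_ratio (Suc m) ^ 2"
    unfolding central_binom_ratio_Suc
    by (simp add: power_divide divide_simps) (simp add: power2_eq_square algebra_simps)
  finally show "real m * central_binom_ratio m ^ 2 \<le> real (Suc m) * central_binom_ratio (Suc m) ^ 2"
    by (simp add: mult.commute)
qed

lemma scaled_central_binom_ratio_tendsto: "(\<lambda>m. real m * central_binom_ratio m ^ 2) \<longlonglongrightarrow> 1 / pi"
proof -
  have "(\<lambda>m. real m / (2 * m + 1) * inverse (\<Prod>k=1..m. 4 * real k ^ 2 / (4 * real k ^ 2 - 1)))
      \<longlonglongrightarrow> 1 / 2 * inverse (pi / 2)"
  proof (rule tendsto_mult)
    show "(\<lambda>m. real m / (2 * m + 1)) \<longlonglongrightarrow> 1 / 2"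
      by real_asymp
    show "(\<lambda>m. inverse (\<Prod>k=1..m. 4 * real k ^ 2 / (4 * real k ^ 2 - 1))) \<longlonglongrightarrow> inverse (pi / 2)"
      by (rule tendsto_inverse[OF wallis]) simp
  qed
  also have "(\<lambda>m. real m / (2 * m + 1) * inverse (\<Prod>k=1..m. 4 * real k ^ 2 / (4 * real k ^ 2 - 1)))
      = (\<lambda>m. real m * central_binom_ratio m ^ 2)"
  proof
    fix m
    have "2 * real m + 1 > 0"
      by simp
    then show "real m / (2 * m + 1) * inverse (\<Prod>k=1..m. 4 * real k ^ 2 / (4 * real k ^ 2 - 1))
        = real m * central_binom_ratio m ^ 2"
      unfolding wallis_partial_product_eq by (simp add: field_simps)
  qed
  finally show ?thesis
    by simp
qed

lemma central_binom_ratio_le: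
  assumes "m \<ge> 1"
  shows "central_binom_ratio m \<le> 1 / sqrt (pi * m)"
proof -
  have "real m * central_binom_ratio m ^ 2 \<le> 1 / pi"
    by (rule incseq_le[OF incseq_scaled_central_binom_ratio scaled_central_binom_ratio_tendsto])
  moreover have "(1 / sqrt (pi * m)) ^ 2 = 1 / (pi * m)"
    by (simp add: power_divide)
  ultimately have "central_binom_ratio m ^ 2 \<le> (1 / sqrt (pi * m)) ^ 2"
    using assms by (simp add: field_simps)
  then show ?thesis
    by (rule power2_le_imp_le) simp
qed

lemma central_binom_ratio_ge:
  assumes "m \<ge> 1"
  shows "1 / (2 * sqrt m) \<le> central_binom_ratio m"
proof -
  have "real 1 * central_binom_ratio 1 ^ 2 \<le> real m * central_binom_ratio m ^ 2"
    using incseq_scaled_central_binom_ratio assms by (rule incseqD)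
  moreover have "(1 / (2 * sqrt m)) ^ 2 = 1 / (4 * m)"
    by (simp add: power_divide power_mult_distrib)
  ultimately have "(1 / (2 * sqrt m)) ^ 2 \<le> central_binom_ratio m ^ 2"
    using assms by (simp add: central_binom_ratio_def field_simps)
  then show ?thesis
    by (rule power2_le_imp_le) (simp add: less_imp_le[OF central_binom_ratio_pos])
qed

lemma spaced_binomial_sum_le:
  fixes T :: "nat set"
  assumes T: "T \<subseteq> {..2 * \<tau>}" "\<tau> \<notin> T"
    and spaced: "\<And>i j. i \<in> insert \<tau> T \<Longrightarrow> j \<in> insert \<tau> T \<Longrightarrow> i < j \<Longrightarrow> i + m \<le> j"
  shows "m * (\<Sum>i\<in>T. (2 * \<tau>) choose i) \<le> 4 ^ \<tau>"
proof -
  define I where "I i = (if \<tau> < i then {i - m<..i} else {i..<i + m})" for i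
  have above: "\<tau> + m \<le> i" if "i \<in> T" "\<tau> < i" for i
    using spaced[of \<tau> i] that by simp
  have below: "i + m \<le> \<tau>" if "i \<in> T" "i < \<tau>" for i
    using spaced[of i \<tau>] that by simp
  have off_centre: "i \<noteq> \<tau>" if "i \<in> T" for i
    using that T(2) by blast
  have card: "card (I i) = m" if "i \<in> T" for i
    using above[OF that] unfolding I_def by auto
  have dominated: "(2 * \<tau>) choose i \<le> (2 * \<tau>) choose j" if "i \<in> T" "j \<in> I i" for i j
  proof (cases "\<tau> < i")
    case True
    then have "\<tau> \<le> j" "j \<le> i" "i \<le> 2 * \<tau>"
      using that above[OF that(1) True] T(1) unfolding I_def by auto
    then show ?thesis
      by (intro binomial_antimono) auto
  next
    case False
    then have "i < \<tau>"
      using off_centre[OF that(1)] by simp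
    then have "i \<le> j" "j \<le> \<tau>"
      using that below[OF that(1)] unfolding I_def by auto
    then show ?thesis
      by (intro binomial_mono) auto
  qed
  have blocks_ordered: "x < y" if "i \<in> T" "j \<in> T" "i < j" "x \<in> I i" "y \<in> I j" for i j x y
    using that spaced[of i j] above[of j] below[of i] off_centre[of i] unfolding I_def
    by (auto split: if_splits)
  have disjoint: "I i \<inter> I j = {}" if "i \<in> T" "j \<in> T" "i \<noteq> j" for i j
  proof (cases "i < j")
    case True
    then show ?thesis
      using blocks_ordered[OF that(1,2)] less_irrefl by blast
  next
    case False
    with that(3) have "j < i"
      by simp
    then show ?thesis
      using blocks_ordered[OF that(2,1)] less_irrefl by blast
  qed
  have blocks_in_range: "I i \<subseteq> {..2 * \<tau>}" if "i \<in> T" for i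
    using that T(1) below[of i] off_centre[of i] unfolding I_def by auto
  have "finite T"
    using T(1) finite_subset by blast
  then have "m * (\<Sum>i\<in>T. (2 * \<tau>) choose i) = (\<Sum>i\<in>T. \<Sum>j\<in>I i. (2 * \<tau>) choose i)"
    by (simp add: sum_distrib_left card mult.commute)
  also have "\<dots> \<le> (\<Sum>i\<in>T. \<Sum>j\<in>I i. (2 * \<tau>) choose j)"
    by (intro sum_mono) (simp add: dominated)
  also have "\<dots> = (\<Sum>j\<in>(\<Union>i\<in>T. I i). (2 * \<tau>) choose j)"
    using \<open>finite T\<close> disjoint by (intro sum.UNION_disjoint[symmetric]) (auto simp: I_def)
  also have "\<dots> \<le> (\<Sum>j\<le>2 * \<tau>. (2 * \<tau>) choose j)"
    using blocks_in_range by (intro sum_mono2) auto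
  also have "\<dots> = 4 ^ \<tau>"
    by (simp add: choose_row_sum power_mult)
  finally show ?thesis .
qed

lemma mod_eq_imp_spaced:
  fixes n i j :: nat
  assumes "2 * i mod n = 2 * j mod n" "i < j"
  shows "i + (n + 1) div 2 \<le> j"
proof -
  have "n dvd 2 * (j - i)"
    using mod_eq_dvd_iff_nat[of "2 * i" "2 * j" n] assms by (simp add: diff_mult_distrib2)
  then have "n \<le> 2 * (j - i)"
    using assms(2) by (intro dvd_imp_le) auto
  with assms(2) show ?thesis
    by presburger
qed

lemma off_centre_return_mass_le:
  assumes "n > 0"
  shows "(\<Sum>i\<in>{i. i \<le> 2 * \<tau> \<and> 2 * i mod n = 2 * \<tau> mod n} - {\<tau>}. real ((2 * \<tau>) choose i)) / 4 ^ \<tau>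
    \<le> 2 / real n"
proof -
  define T where "T = {i. i \<le> 2 * \<tau> \<and> 2 * i mod n = 2 * \<tau> mod n} - {\<tau>}"
  define s where "s = (\<Sum>i\<in>T. (2 * \<tau>) choose i)"
  have "(n + 1) div 2 * s \<le> 4 ^ \<tau>"
    unfolding s_def T_def
  proof (rule spaced_binomial_sum_le)
    fix i j
    assume "i \<in> insert \<tau> ({i. i \<le> 2 * \<tau> \<and> 2 * i mod n = 2 * \<tau> mod n} - {\<tau>})"
      and "j \<in> insert \<tau> ({i. i \<le> 2 * \<tau> \<and> 2 * i mod n = 2 * \<tau> mod n} - {\<tau>})" and "i < j"
    then show "i + (n + 1) div 2 \<le> j"
      by (intro mod_eq_imp_spaced) auto
  qed auto
  then have "real ((n + 1) div 2 * s) \<le> real (4 ^ \<tau>)"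
    by (simp only: of_nat_le_iff)
  then have count: "real ((n + 1) div 2) * real s \<le> 4 ^ \<tau>"
    by simp
  have "real n \<le> 2 * real ((n + 1) div 2)"
    by linarith
  then have "real n * real s \<le> 2 * real ((n + 1) div 2) * real s"
    by (rule mult_right_mono) simp
  also have "\<dots> \<le> 2 * 4 ^ \<tau>"
    using count by simp
  finally show ?thesis
    using assms unfolding T_def[symmetric] s_def by (simp add: field_simps)
qed

theorem mainTheorem5:
  fixes n \<tau> :: nat
  assumes "n \<ge> 3" and "\<tau> \<ge> 1"
  shows "max (1 / real n) (1 / (2 * sqrt (real \<tau>)))
           \<le> cyc_inner n (e0 n) ((cycle_op n ^^ (2 * \<tau>)) (e0 n))
       \<and> cyc_inner n (e0 n) ((cycle_op n ^^ (2 * \<tau>)) (e0 n))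
           \<le> 4 / real n + 1 / sqrt (pi * real \<tau>)"
proof -
  have n: "n > 0"
    using assms(1) by simp
  define S where "S = {i. i \<le> 2 * \<tau> \<and> 2 * i mod n = 2 * \<tau> mod n}"
  define R where "R = (\<Sum>i\<in>S - {\<tau>}. real ((2 * \<tau>) choose i)) / 4 ^ \<tau>"
  have "finite S" "\<tau> \<in> S"
    unfolding S_def by auto
  then have split: "cyc_inner n (e0 n) ((cycle_op n ^^ (2 * \<tau>)) (e0 n)) = central_binom_ratio \<tau> + R"
    unfolding return_prob_eq_binomial_sum[OF n] S_def[symmetric] R_def central_binom_ratio_def
    by (simp add: sum.remove add_divide_distrib)
  have "0 \<le> R"
    unfolding R_def by (simp add: sum_nonneg)
  moreover have "R \<le> 2 / real n"
    unfolding R_def S_def by (rule off_centre_return_mass_le[OF n])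
  moreover have "2 / real n \<le> 4 / real n"
    by (simp add: divide_right_mono)
  ultimately show ?thesis
    using return_prob_ge_inverse[OF n, of \<tau>] split
      central_binom_ratio_ge[OF assms(2)] central_binom_ratio_le[OF assms(2)]
    unfolding max.bounded_iff by linarith
qed

end
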